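(* Let $K=2$ and suppose that for every horizon $T$ (a multiple of $100$) a valid pair $(\eta,\gamma)=(\eta_T,\gamma_T)$ in the non-trivial regime is chosen. Then there exist a constant $c>0$ and $T_0$ such that for all $T\ge T_0$, WSU-UX run with $(\eta_T,\gamma_T)$ on the two-phase loss sequence satisfies $\mathbb{E}[\mathcal R_T]\ge c\,T^{2/3}$.
   Context: WSU-UX. Fix integers $K\ge 2$ and $T\ge 1$ and hyperparameters $\eta,\gamma$. The pair $(\eta,\gamma)$ is called valid if $\eta,\gamma\in(0,1/2)$ and $\eta K/\gamma\le 1/2$. Given a fixed loss sequence $\ell_t\in[0,1]^K$, WSU-UX sets $\pi_{1,i}=1/K$ and in each round $t$: forms $\tilde\pi_{t,i}=(1-\gamma)\pi_{t,i}+\gamma/K$; draws $I_t$ with $\Pr(I_t=i\mid\mathcal F_{t-1})=\tilde\pi_{t,i}$; sets $\hat\ell_{t,i}=\ell_{t,i}\mathbf 1[I_t=i]/\tilde\pi_{t,i}$; and updates $\pi_{t+1,i}=\pi_{t,i}\bigl(1-\eta(\hat\ell_{t,i}-\sum_{j}\pi_{t,j}\hat\ell_{t,j})\bigr)$; $\mathcal F_t$ is the history generated by $I_1,\dots,I_t$. The regret is $\mathbb{E}[\mathcal R_T]=\mathbb{E}[\sum_{t}\sum_{j}\tilde\pi_{t,j}\ell_{t,j}]-\min_i\sum_t\ell_{t,i}$. Non-trivial regime: $\eta\ge T^{-2/3}$ and $\gamma\le T^{-1/3}$. Two-phase loss sequence ($K=2$, $T$ a multiple of $100$, $T_1=T/100$):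 $\ell_{t,1}=1,\ell_{t,2}=0$ for $1\le t\le T_1$ and $\ell_{t,1}=0,\ell_{t,2}=1$ for $T_1<t\le T$. *)

theory Defs
  imports Complex_Main
begin

text \<open>Arms are indexed 0..K-1 (arm i of the paper is index i-1). Rounds are 1..T.
  A loss sequence is a function ell t i (round t, arm i).
  Histories are lists of chosen arms stored in REVERSE chronological order
  (the head is the most recent arm).\<close>

definition valid_pair :: "nat \<Rightarrow> real \<Rightarrow> real \<Rightarrow> bool" where
  "valid_pair K \<eta> \<gamma> \<longleftrightarrow> 0 < \<eta> \<and> \<eta> < 1/2 \<and> 0 < \<gamma> \<and> \<gamma> < 1/2 \<and> \<eta> * real K / \<gamma> \<le> 1/2"

definition wsu_mix :: "nat \<Rightarrow> real \<Rightarrow> (nat \<Rightarrow> real) \<Rightarrow> nat \<Rightarrow> real" where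
  "wsu_mix K \<gamma> p i = (1 - \<gamma>) * p i + \<gamma> / real K"

definition wsu_est :: "nat \<Rightarrow> real \<Rightarrow> (nat \<Rightarrow> real) \<Rightarrow> (nat \<Rightarrow> real) \<Rightarrow> nat \<Rightarrow> nat \<Rightarrow> real" where
  "wsu_est K \<gamma> p l a i = (if i = a then l i / wsu_mix K \<gamma> p i else 0)"

definition wsu_update :: "nat \<Rightarrow> real \<Rightarrow> real \<Rightarrow> (nat \<Rightarrow> real) \<Rightarrow> (nat \<Rightarrow> real) \<Rightarrow> nat \<Rightarrow> nat \<Rightarrow> real" where
  "wsu_update K \<eta> \<gamma> p l a i =
     p i * (1 - \<eta> * (wsu_est K \<gamma> p l a i - (\<Sum>j<K. p j * wsu_est K \<gamma> p l a j)))"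

text \<open>pi after the (reversed) history h: if length h = t-1 this is the vector pi_t.\<close>
fun wsu_pi :: "nat \<Rightarrow> real \<Rightarrow> real \<Rightarrow> (nat \<Rightarrow> nat \<Rightarrow> real) \<Rightarrow> nat list \<Rightarrow> nat \<Rightarrow> real" where
  "wsu_pi K \<eta> \<gamma> ell [] = (\<lambda>i. 1 / real K)"
| "wsu_pi K \<eta> \<gamma> ell (a # h) =
     wsu_update K \<eta> \<gamma> (wsu_pi K \<eta> \<gamma> ell h) (ell (length h + 1)) a"

fun wsu_prob :: "nat \<Rightarrow> real \<Rightarrow> real \<Rightarrow> (nat \<Rightarrow> nat \<Rightarrow> real) \<Rightarrow> nat list \<Rightarrow> real" where
  "wsu_prob K \<eta> \<gamma> ell [] = 1"
| "wsu_prob K \<eta> \<gamma> ell (a # h) =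
     wsu_prob K \<eta> \<gamma> ell h * wsu_mix K \<gamma> (wsu_pi K \<eta> \<gamma> ell h) a"

text \<open>Realised algorithm loss sum_t sum_j tilde-pi_{t,j} ell_{t,j} along a full reversed
  history h of length T; the first t-1 rounds are  drop (T - (t-1)) h.\<close>
definition wsu_alg_loss :: "nat \<Rightarrow> real \<Rightarrow> real \<Rightarrow> (nat \<Rightarrow> nat \<Rightarrow> real) \<Rightarrow> nat \<Rightarrow> nat list \<Rightarrow> real" where
  "wsu_alg_loss K \<eta> \<gamma> ell T h =
     (\<Sum>t=1..T. \<Sum>j<K. wsu_mix K \<gamma> (wsu_pi K \<eta> \<gamma> ell (drop (T - (t - 1)) h)) j * ell t j)"

definition wsu_expected_regret :: "nat \<Rightarrow> real \<Rightarrow> real \<Rightarrow> (nat \<Rightarrow> nat \<Rightarrow> real) \<Rightarrow> nat \<Rightarrow> real" where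
  "wsu_expected_regret K \<eta> \<gamma> ell T =
     (\<Sum>h\<in>{h. length h = T \<and> set h \<subseteq> {..<K}}.
        wsu_prob K \<eta> \<gamma> ell h * wsu_alg_loss K \<eta> \<gamma> ell T h)
     - Min ((\<lambda>i. \<Sum>t=1..T. ell t i) ` {..<K})"

definition two_phase_loss :: "nat \<Rightarrow> nat \<Rightarrow> nat \<Rightarrow> real" where
  "two_phase_loss T t i =
     (if t \<le> T div 100 then (if i = 0 then 1 else 0) else (if i = 0 then 0 else 1))"

end

theory Submission
  imports Defs
begin

text \<open>Let \<open>p\<close> be the weight of the arm that is optimal in the first phase and
  \<open>q = (1-\<gamma>)p + \<gamma>/2\<close> its sampling probability. The potential \<open>E[-ln p]\<close> rises in every
  round of the first phase by at least \<open>\<eta>(1 - E p)\<close> plus the second-order term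
  \<open>\<eta>\<^sup>2 E[(1-p)\<^sup>2/(2q)] \<ge> \<eta>\<^sup>2/(8(E p + \<gamma>/2))\<close>, and falls in every
  round of the second phase by at most \<open>\<eta>(1 - E p)\<close>; it starts at \<open>ln 2\<close> and ends
  exponentially small. Hence the loss of the second phase exceeds the saving of the first by
  roughly \<open>\<eta> \<Sum>\<^sub>t 1/(8(E p\<^sub>t + \<gamma>/2))\<close>, on top of the cost \<open>\<gamma>T/2\<close> of uniform exploration.
  Since \<open>E p\<^sub>t\<close> decays geometrically during the first phase, that sum is of order \<open>T/\<gamma>\<close>,
  and \<open>\<gamma>T + \<eta>T/\<gamma> \<ge> c T^(2/3)\<close> once \<open>\<eta> \<ge> T^(-2/3)\<close>.\<close>

locale wsu =
  fixes K :: nat and \<eta> \<gamma> :: real and ell :: "nat \<Rightarrow> nat \<Rightarrow> real"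
  assumes arms_pos: "0 < K"
    and valid: "valid_pair K \<eta> \<gamma>"
    and loss_nonneg: "\<And>t i. 0 \<le> ell t i"
    and loss_le_one: "\<And>t i. ell t i \<le> 1"
begin

abbreviation \<pi> :: "nat list \<Rightarrow> nat \<Rightarrow> real" where "\<pi> \<equiv> wsu_pi K \<eta> \<gamma> ell"
abbreviation mix :: "nat list \<Rightarrow> nat \<Rightarrow> real" where "mix h \<equiv> wsu_mix K \<gamma> (\<pi> h)"
abbreviation prob :: "nat list \<Rightarrow> real" where "prob \<equiv> wsu_prob K \<eta> \<gamma> ell"

lemma eta_pos: "0 < \<eta>" and gamma_pos: "0 < \<gamma>" and gamma_less_half: "\<gamma> < 1/2"
  and eta_arms_le: "\<eta> * K \<le> \<gamma> / 2"
  using valid by (auto simp: valid_pair_def divide_le_eq)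

lemma pi_Cons:
  "\<pi> (a # h) i = \<pi> h i * (1 - \<eta> * (wsu_est K \<gamma> (\<pi> h) (ell (length h + 1)) a i
     - (\<Sum>j<K. \<pi> h j * wsu_est K \<gamma> (\<pi> h) (ell (length h + 1)) a j)))"
  by (simp add: wsu_update_def)

lemma sum_pi: "(\<Sum>i<K. \<pi> h i) = 1"
proof (induction h)
  case Nil
  then show ?case using arms_pos by simp
next
  case (Cons a h)
  define est where "est j = wsu_est K \<gamma> (\<pi> h) (ell (length h + 1)) a j" for j
  define S where "S = (\<Sum>j<K. \<pi> h j * est j)"
  have "(\<Sum>i<K. \<pi> (a # h) i) = (\<Sum>i<K. \<pi> h i - \<eta> * (\<pi> h i * est i) + \<eta> * S * \<pi> h i)"
    by (simp only: pi_Cons est_def[symmetric] S_def[symmetric]) (simp add: algebra_simps)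
  also have "\<dots> = (\<Sum>i<K. \<pi> h i) - \<eta> * S + \<eta> * S * (\<Sum>i<K. \<pi> h i)"
    by (simp add: sum.distrib sum_subtractf sum_distrib_left S_def)
  finally show ?case using Cons.IH by simp
qed

lemma mix_ge: "0 \<le> \<pi> h i \<Longrightarrow> \<gamma> / K \<le> mix h i"
  using gamma_less_half by (simp add: wsu_mix_def)

lemma pi_pos: "i < K \<Longrightarrow> 0 < \<pi> h i"
proof (induction h arbitrary: i)
  case Nil
  then show ?case using arms_pos by simp
next
  case (Cons a h)
  define est where "est j = wsu_est K \<gamma> (\<pi> h) (ell (length h + 1)) a j" for j
  have mix_pos: "0 < mix h j" if "j < K" for j
    using mix_ge[of h j] Cons.IH[OF that] gamma_pos arms_pos
    by (meson divide_pos_pos less_le less_le_trans of_nat_0_less_iff)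
  have est_nonneg: "0 \<le> est j" if "j < K" for j
    using mix_pos[OF that] loss_nonneg by (auto simp: est_def wsu_est_def)
  have "est i \<le> 1 / mix h i"
    using mix_pos[OF Cons.prems] loss_le_one by (auto simp: est_def wsu_est_def divide_right_mono)
  also have "\<dots> \<le> 1 / (\<gamma> / K)"
    using mix_ge[of h i] Cons.IH[OF Cons.prems] mix_pos[OF Cons.prems] gamma_pos arms_pos
    by (intro divide_left_mono) auto
  finally have "\<eta> * est i \<le> \<eta> * (1 / (\<gamma> / K))"
    by (rule mult_left_mono) (use eta_pos in simp)
  also have "\<dots> \<le> 1/2"
    using valid by (simp add: valid_pair_def times_divide_eq_right)
  finally have est_le: "\<eta> * est i \<le> 1/2" .
  have "0 \<le> \<eta> * (\<Sum>j<K. \<pi> h j * est j)"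
    using eta_pos Cons.IH est_nonneg
    by (intro mult_nonneg_nonneg sum_nonneg) (auto simp: less_imp_le)
  then have "1/2 \<le> 1 - \<eta> * (est i - (\<Sum>j<K. \<pi> h j * est j))"
    using est_le by (simp add: right_diff_distrib)
  moreover have "\<pi> (a # h) i = \<pi> h i * (1 - \<eta> * (est i - (\<Sum>j<K. \<pi> h j * est j)))"
    by (simp only: pi_Cons est_def)
  ultimately show ?case
    using Cons.IH[OF Cons.prems] by simp
qed

lemma mix_pos: "i < K \<Longrightarrow> 0 < mix h i"
  using mix_ge[OF less_imp_le[OF pi_pos]] gamma_pos arms_pos
  by (meson divide_pos_pos less_le_trans of_nat_0_less_iff)

lemma sum_mix: "(\<Sum>i<K. mix h i) = 1"
  using arms_pos by (simp add: wsu_mix_def sum.distrib sum_distrib_left[symmetric] sum_pi)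

lemma prob_nonneg: "set h \<subseteq> {..<K} \<Longrightarrow> 0 \<le> prob h"
  by (induction h) (auto intro!: mult_nonneg_nonneg less_imp_le[OF mix_pos])

definition histories :: "nat \<Rightarrow> nat list set" where
  "histories n = {h. set h \<subseteq> {..<K} \<and> length h = n}"

definition expect :: "nat \<Rightarrow> (nat list \<Rightarrow> real) \<Rightarrow> real" where
  "expect n f = (\<Sum>h\<in>histories n. prob h * f h)"

lemma finite_histories: "finite (histories n)"
  unfolding histories_def by (rule finite_lists_length_eq) simp

lemma length_histories: "h \<in> histories n \<Longrightarrow> length h = n"
  by (simp add: histories_def)

lemma expect_0: "expect 0 f = f []"
proof -
  have "histories 0 = {[]}"
    by (auto simp: histories_def)
  then show ?thesis by (simp add: expect_def)
qed

lemma expect_Suc: "expect (Suc n) f = expect n (\<lambda>h. \<Sum>a<K. mix h a * f (a # h))"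
proof -
  have "histories (Suc n) = (\<lambda>(h, a). a # h) ` (histories n \<times> {..<K})"
    unfolding histories_def by (rule lists_length_Suc_eq)
  moreover have "inj_on (\<lambda>(h, a). a # h) (histories n \<times> {..<K})"
    by (auto simp: inj_on_def)
  ultimately have "expect (Suc n) f = (\<Sum>(h, a)\<in>histories n \<times> {..<K}. prob (a # h) * f (a # h))"
    unfolding expect_def by (intro sum.reindex_cong) auto
  also have "\<dots> = (\<Sum>h\<in>histories n. \<Sum>a<K. prob (a # h) * f (a # h))"
    by (rule sum.cartesian_product[symmetric])
  also have "\<dots> = expect n (\<lambda>h. \<Sum>a<K. mix h a * f (a # h))"
    by (simp add: expect_def sum_distrib_left mult.assoc)
  finally show ?thesis .
qed

lemma expect_add: "expect n (\<lambda>h. f h + g h) = expect n f + expect n g"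
  by (simp add: expect_def distrib_left sum.distrib)

lemma expect_diff: "expect n (\<lambda>h. f h - g h) = expect n f - expect n g"
  by (simp add: expect_def right_diff_distrib sum_subtractf)

lemma expect_scale: "expect n (\<lambda>h. c * f h) = c * expect n f"
  by (simp add: expect_def sum_distrib_left ac_simps)

lemma expect_const: "expect n (\<lambda>_. c) = c"
proof (induction n)
  case (Suc n)
  then show ?case by (simp add: expect_Suc sum_distrib_right[symmetric] sum_mix)
qed (simp add: expect_0)

lemma expect_mono: "(\<And>h. h \<in> histories n \<Longrightarrow> f h \<le> g h) \<Longrightarrow> expect n f \<le> expect n g"
  unfolding expect_def
  by (intro sum_mono mult_left_mono) (auto simp: histories_def prob_nonneg)

lemma expect_drop: "expect (n + k) (\<lambda>h. f (drop k h)) = expect n f"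
proof (induction k)
  case (Suc k)
  then show ?case by (simp add: expect_Suc sum_distrib_right[symmetric] sum_mix)
qed simp

lemma expect_pos: "(\<And>h. h \<in> histories n \<Longrightarrow> 0 < f h) \<Longrightarrow> 0 < expect n f"
proof -
  assume pos: "\<And>h. h \<in> histories n \<Longrightarrow> 0 < f h"
  have "replicate n 0 \<in> histories n"
    using arms_pos by (simp add: histories_def set_replicate_conv_if)
  then have ne: "histories n \<noteq> {}" by blast
  define m where "m = Min (f ` histories n)"
  have "0 < m"
    unfolding m_def using pos ne finite_histories by simp
  also have "m = expect n (\<lambda>_. m)"
    by (simp add: expect_const)
  also have "\<dots> \<le> expect n f"
    unfolding m_def using finite_histories by (intro expect_mono) simp
  finally show ?thesis .
qed

lemma inverse_expect_le_expect_inverse: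
  assumes pos: "\<And>h. h \<in> histories n \<Longrightarrow> 0 < f h"
  shows "1 / expect n f \<le> expect n (\<lambda>h. 1 / f h)"
proof -
  define m where "m = expect n f"
  have m: "0 < m"
    unfolding m_def using pos by (rule expect_pos)
  \<comment> \<open>the tangent line of the convex function \<open>1/y\<close> at \<open>y = m\<close>\<close>
  have tangent: "2 / m - (1 / m^2) * f h \<le> 1 / f h" if "h \<in> histories n" for h
  proof -
    have "0 \<le> (f h - m)^2 / (f h * m^2)"
      using pos[OF that] m by simp
    also have "\<dots> = 1 / f h - (2 / m - (1 / m^2) * f h)"
      using pos[OF that] m by (simp add: field_simps power2_eq_square)
    finally show ?thesis by simp
  qed
  have "expect n (\<lambda>h. 2 / m - (1 / m^2) * f h) = 2 / m - (1 / m^2) * m"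
    by (simp only: expect_diff expect_const expect_scale m_def)
  then have "1 / m = expect n (\<lambda>h. 2 / m - (1 / m^2) * f h)"
    using m by (simp add: field_simps power2_eq_square)
  also have "\<dots> \<le> expect n (\<lambda>h. 1 / f h)"
    using tangent by (rule expect_mono)
  finally show ?thesis by (simp add: m_def)
qed

lemma expected_regret_eq:
  "wsu_expected_regret K \<eta> \<gamma> ell T =
     (\<Sum>n<T. expect n (\<lambda>h. \<Sum>j<K. mix h j * ell (Suc n) j))
     - Min ((\<lambda>i. \<Sum>t=1..T. ell t i) ` {..<K})"
proof -
  define g where "g = (\<lambda>t h. \<Sum>j<K. mix h j * ell t j)"
  have "{h. length h = T \<and> set h \<subseteq> {..<K}} = histories T"
    by (auto simp: histories_def)
  then have "(\<Sum>h\<in>{h. length h = T \<and> set h \<subseteq> {..<K}}. prob h * wsu_alg_loss K \<eta> \<gamma> ell T h)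
      = (\<Sum>h\<in>histories T. \<Sum>t=1..T. prob h * g t (drop (T - (t - 1)) h))"
    by (simp add: wsu_alg_loss_def g_def sum_distrib_left)
  also have "\<dots> = (\<Sum>t=1..T. expect T (\<lambda>h. g t (drop (T - (t - 1)) h)))"
    unfolding expect_def by (rule sum.swap)
  also have "\<dots> = (\<Sum>t=1..T. expect (t - 1) (g t))"
  proof (rule sum.cong[OF refl])
    fix t assume "t \<in> {1..T}"
    then have "T = (t - 1) + (T - (t - 1))" by auto
    then show "expect T (\<lambda>h. g t (drop (T - (t - 1)) h)) = expect (t - 1) (g t)"
      using expect_drop[of "t - 1" "T - (t - 1)" "g t"] by simp
  qed
  also have "\<dots> = (\<Sum>n<T. expect n (g (Suc n)))"
    using sum_bounds_lt_plus1[of "\<lambda>t. expect (t - 1) (g t)" T] by simp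
  finally show ?thesis
    by (simp add: wsu_expected_regret_def g_def)
qed

end

lemma ln_one_minus_le:
  fixes x :: real
  assumes x: "0 \<le> x" "x < 1"
  shows "ln (1 - x) \<le> - x - x^2 / 2"
proof -
  let ?f = "\<lambda>y::real. - y - y^2 / 2 - ln (1 - y)"
  have deriv: "(?f has_real_derivative (1 / (1 - y) - 1 - y)) (at y)" if "y < 1" for y
    using that by (auto intro!: derivative_eq_intros simp: field_simps)
  have "?f 0 \<le> ?f x"
  proof (rule DERIV_nonneg_imp_increasing_open[OF x(1)])
    fix y assume y: "0 < y" "y < x"
    then have "y < 1" "0 \<le> 1 / (1 - y) - 1 - y"
      using x by (simp_all add: field_simps)
    then show "\<exists>d. (?f has_real_derivative d) (at y) \<and> 0 \<le> d"
      using deriv by blast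
  next
    show "continuous_on {0..x} ?f"
      using x by (intro continuous_at_imp_continuous_on ballI DERIV_isCont[OF deriv]) auto
  qed
  then show ?thesis by simp
qed

lemma sum_lessThan_two: "(\<Sum>j<2. f j) = f 0 + f (Suc 0)"
  by (simp add: numeral_2_eq_2)

locale wsu_two_phase =
  fixes \<eta> \<gamma> :: real and T :: nat
  assumes valid_two_arms: "valid_pair 2 \<eta> \<gamma>"
begin

sublocale wsu 2 \<eta> \<gamma> "two_phase_loss T"
  using valid_two_arms by unfold_locales (auto simp: two_phase_loss_def)

abbreviation T\<^sub>1 :: nat where "T\<^sub>1 \<equiv> T div 100"

definition p :: "nat list \<Rightarrow> real" where "p h = \<pi> h 0"

lemma pi_arm1: "\<pi> h (Suc 0) = 1 - p h"
  using sum_pi[of h] by (simp add: p_def sum_lessThan_two)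

lemma p_pos: "0 < p h" and p_less_one: "p h < 1"
  using pi_pos[of 0 h] pi_pos[of "Suc 0" h] by (simp_all add: p_def pi_arm1)

lemma mix_arm0: "mix h 0 = (1 - \<gamma>) * p h + \<gamma> / 2"
  by (simp add: wsu_mix_def p_def)

lemma mix_arm1: "mix h (Suc 0) = 1 - mix h 0"
  using sum_mix[of h] by (simp add: sum_lessThan_two)

lemma expect_Suc_two_arms:
  "expect (Suc n) f = expect n (\<lambda>h. mix h 0 * f (0 # h) + mix h (Suc 0) * f (Suc 0 # h))"
  unfolding expect_Suc by (simp add: sum_lessThan_two)

lemma expect_mix_arm0: "expect n (\<lambda>h. mix h 0) = (1 - \<gamma>) * expect n p + \<gamma> / 2"
  by (simp only: mix_arm0 expect_add expect_scale expect_const)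

lemma p_Cons:
  assumes "l = two_phase_loss T (length h + 1)"
  shows "p (a # h) = p h * (1 - \<eta> * (wsu_est 2 \<gamma> (\<pi> h) l a 0
     - (p h * wsu_est 2 \<gamma> (\<pi> h) l a 0 + (1 - p h) * wsu_est 2 \<gamma> (\<pi> h) l a (Suc 0))))"
  using assms pi_arm1[of h] unfolding p_def by (simp add: wsu_update_def sum_lessThan_two)

lemma p_Cons_phase1:
  assumes "length h < T\<^sub>1"
  shows "p (0 # h) = p h * (1 - \<eta> * (1 - p h) / mix h 0)" and "p (Suc 0 # h) = p h"
  using assms mix_pos[of 0 h]
  by (simp_all add: p_Cons two_phase_loss_def wsu_est_def field_simps)

lemma p_Cons_phase2:
  assumes "\<not> length h < T\<^sub>1"
  shows "p (Suc 0 # h) = p h * (1 + \<eta> * (1 - p h) / mix h (Suc 0))" and "p (0 # h) = p h"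
  using assms mix_pos[of "Suc 0" h]
  by (simp_all add: p_Cons two_phase_loss_def wsu_est_def field_simps)

lemma step_size_bounds:
  assumes "i < 2"
  shows "0 \<le> \<eta> * (1 - p h) / mix h i" and "\<eta> * (1 - p h) / mix h i \<le> 1/2"
proof -
  have mix: "\<gamma> / 2 \<le> mix h i"
    using mix_ge[OF less_imp_le[OF pi_pos[OF assms]]] by simp
  show "0 \<le> \<eta> * (1 - p h) / mix h i"
    using eta_pos p_less_one[of h] mix_pos[OF assms] by (simp add: less_imp_le)
  have "\<eta> * (1 - p h) \<le> \<eta>"
    using eta_pos p_pos[of h] by (simp add: mult_left_le)
  also have "\<dots> \<le> mix h i / 2"
    using eta_arms_le mix by simp
  finally show "\<eta> * (1 - p h) / mix h i \<le> 1/2"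
    using mix_pos[OF assms] by (simp add: divide_le_eq)
qed

lemma p_le_half: "set h \<subseteq> {..<2} \<Longrightarrow> length h \<le> T\<^sub>1 \<Longrightarrow> p h \<le> 1/2"
proof (induction h)
  case Nil
  then show ?case by (simp add: p_def)
next
  case (Cons a h)
  then have phase1: "length h < T\<^sub>1" and "a = 0 \<or> a = Suc 0" and IH: "p h \<le> 1/2"
    by auto
  moreover have "p h * (1 - \<eta> * (1 - p h) / mix h 0) \<le> p h"
    using step_size_bounds(1)[of 0 h] p_pos[of h] by (simp add: mult_left_le)
  ultimately have "p (a # h) \<le> p h"
    using p_Cons_phase1[OF phase1] by auto
  with IH show ?case by simp
qed

lemma neg_ln_p_drift_phase1:
  assumes phase1: "length h < T\<^sub>1"
  shows "- ln (p h) + \<eta> * (1 - p h) + \<eta>^2 * ((1 - p h)^2 / (2 * mix h 0))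
    \<le> mix h 0 * - ln (p (0 # h)) + mix h (Suc 0) * - ln (p (Suc 0 # h))"
proof -
  define x where "x = \<eta> * (1 - p h) / mix h 0"
  have "0 \<le> x" "x \<le> 1/2"
    using step_size_bounds[of 0 h] unfolding x_def by simp_all
  then have x: "0 \<le> x" "x < 1"
    by simp_all
  have mix: "0 < mix h 0"
    using mix_pos by simp
  have "- ln (p h) + \<eta> * (1 - p h) + \<eta>^2 * ((1 - p h)^2 / (2 * mix h 0))
      = - ln (p h) + mix h 0 * x + mix h 0 * x^2 / 2"
    using mix by (simp add: x_def power2_eq_square field_simps)
  also have "\<dots> \<le> - ln (p h) - mix h 0 * ln (1 - x)"
    using mult_left_mono[OF ln_one_minus_le[OF x] less_imp_le[OF mix]] by (simp add: algebra_simps)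
  also have "\<dots> = mix h 0 * - ln (p (0 # h)) + mix h (Suc 0) * - ln (p (Suc 0 # h))"
  proof -
    have "ln (p (0 # h)) = ln (p h) + ln (1 - x)" and "ln (p (Suc 0 # h)) = ln (p h)"
      using p_Cons_phase1[OF phase1] p_pos[of h] x by (simp_all add: x_def[symmetric] ln_mult)
    then show ?thesis
      by (simp add: mix_arm1 algebra_simps)
  qed
  finally show ?thesis .
qed

lemma neg_ln_p_drift_phase2:
  assumes phase2: "\<not> length h < T\<^sub>1"
  shows "- ln (p h) - \<eta> * (1 - p h)
    \<le> mix h 0 * - ln (p (0 # h)) + mix h (Suc 0) * - ln (p (Suc 0 # h))"
proof -
  define y where "y = \<eta> * (1 - p h) / mix h (Suc 0)"
  have y: "0 \<le> y"
    using step_size_bounds(1)[of "Suc 0" h] unfolding y_def by simp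
  have mix: "0 < mix h (Suc 0)"
    using mix_pos by simp
  have "- ln (p h) - \<eta> * (1 - p h) = - ln (p h) - mix h (Suc 0) * y"
    using mix by (simp add: y_def)
  also have "\<dots> \<le> - ln (p h) - mix h (Suc 0) * ln (1 + y)"
    using mult_left_mono[OF ln_add_one_self_le_self[OF y] less_imp_le[OF mix]] by simp
  also have "\<dots> = mix h 0 * - ln (p (0 # h)) + mix h (Suc 0) * - ln (p (Suc 0 # h))"
  proof -
    have "ln (p (Suc 0 # h)) = ln (p h) + ln (1 + y)" and "ln (p (0 # h)) = ln (p h)"
      using p_Cons_phase2[OF phase2] p_pos[of h] y by (simp_all add: y_def[symmetric] ln_mult)
    then show ?thesis
      unfolding mix_arm1 by (simp add: algebra_simps)
  qed
  finally show ?thesis .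
qed

lemma p_drift_phase1:
  assumes phase1: "length h < T\<^sub>1" and half: "p h \<le> 1/2"
  shows "mix h 0 * p (0 # h) + mix h (Suc 0) * p (Suc 0 # h) \<le> (1 - \<eta>/2) * p h"
proof -
  have "mix h 0 * p (0 # h) + mix h (Suc 0) * p (Suc 0 # h) = p h - \<eta> * (1 - p h) * p h"
    using p_Cons_phase1[OF phase1] mix_pos[of 0 h] by (simp add: mix_arm1 field_simps)
  also have "\<dots> \<le> p h - \<eta> * (1/2) * p h"
    using half eta_pos p_pos[of h] by (simp add: mult_right_mono)
  finally show ?thesis by (simp add: algebra_simps)
qed

lemma inverse_p_drift_phase1:
  assumes phase1: "length h < T\<^sub>1"
  shows "mix h 0 * (1 / p (0 # h)) + mix h (Suc 0) * (1 / p (Suc 0 # h)) \<le> (1 + 2 * \<eta>) * (1 / p h)"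
proof -
  define x where "x = \<eta> * (1 - p h) / mix h 0"
  have x: "0 \<le> x" "x \<le> 1/2"
    using step_size_bounds[of 0 h] unfolding x_def by simp_all
  have p0: "p (0 # h) = p h * (1 - x)" and p1: "p (Suc 0 # h) = p h"
    using p_Cons_phase1[OF phase1] by (simp_all add: x_def)
  have "mix h 0 * (1 / p (0 # h)) + mix h (Suc 0) * (1 / p (Suc 0 # h))
      = (mix h 0 / (1 - x) + (1 - mix h 0)) / p h"
    using x p_pos[of h] unfolding p0 p1 mix_arm1 by (simp add: field_simps)
  also have "\<dots> \<le> (1 + 2 * \<eta>) / p h"
  proof -
    have "mix h 0 * x \<le> \<eta>"
      using mix_pos[of 0 h] eta_pos p_pos[of h] by (simp add: x_def mult_left_le)
    also have "\<dots> \<le> 2 * \<eta> * (1 - x)"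
      using eta_pos x by (simp add: algebra_simps)
    finally have "mix h 0 / (1 - x) \<le> mix h 0 + 2 * \<eta>"
      using x by (simp add: divide_le_eq algebra_simps)
    then show ?thesis
      using p_pos[of h] by (intro divide_right_mono) auto
  qed
  finally show ?thesis by simp
qed

lemma inverse_p_drift_phase2:
  assumes phase2: "\<not> length h < T\<^sub>1"
  shows "mix h 0 * (1 / p (0 # h) - 1) + mix h (Suc 0) * (1 / p (Suc 0 # h) - 1)
    \<le> (1 - \<eta>/2) * (1 / p h - 1)"
proof -
  define y where "y = \<eta> * (1 - p h) / mix h (Suc 0)"
  have y: "0 \<le> y" "y \<le> 1/2"
    using step_size_bounds[of "Suc 0" h] unfolding y_def by simp_all
  have odds: "0 \<le> 1 / p h - 1"
    using p_pos[of h] p_less_one[of h] by simp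
  have p1: "p (Suc 0 # h) = p h * (1 + y)" and p0: "p (0 # h) = p h"
    using p_Cons_phase2[OF phase2] by (simp_all add: y_def)
  have "mix h 0 * (1 / p (0 # h) - 1) + mix h (Suc 0) * (1 / p (Suc 0 # h) - 1)
      = (1 / p h - 1) - mix h (Suc 0) * (1 / p h - 1 / (p h * (1 + y)))"
    unfolding p0 p1 mix_arm1 by (simp add: algebra_simps)
  also have "1 / p h - 1 / (p h * (1 + y)) = y / (p h * (1 + y))"
    using p_pos[of h] y by (simp add: divide_simps)
  also have "mix h (Suc 0) * (y / (p h * (1 + y))) = (1 / p h - 1) * (\<eta> / (1 + y))"
    using mix_pos[of "Suc 0" h] p_pos[of h] y by (simp add: y_def divide_simps)
  also have "(1 / p h - 1) - (1 / p h - 1) * (\<eta> / (1 + y)) \<le> (1 - \<eta> / 2) * (1 / p h - 1)"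
  proof -
    have "\<eta> / 2 \<le> \<eta> / (1 + y)"
      using y eta_pos by (intro divide_left_mono) auto
    then have "(1 / p h - 1) * (\<eta> / 2) \<le> (1 / p h - 1) * (\<eta> / (1 + y))"
      using odds by (rule mult_left_mono)
    moreover have "(1 - \<eta> / 2) * (1 / p h - 1) = (1 / p h - 1) - (1 / p h - 1) * (\<eta> / 2)"
      by (simp only: left_diff_distrib right_diff_distrib mult_1_left mult.commute)
    ultimately show ?thesis by linarith
  qed
  finally show ?thesis .
qed

lemma expect_neg_ln_p_phase1:
  assumes "n < T\<^sub>1"
  shows "expect n (\<lambda>h. - ln (p h)) + \<eta> * (1 - expect n p)
      + \<eta>^2 * expect n (\<lambda>h. (1 - p h)^2 / (2 * mix h 0))
    \<le> expect (Suc n) (\<lambda>h. - ln (p h))"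
proof -
  have "expect n (\<lambda>h. - ln (p h) + \<eta> * (1 - p h) + \<eta>^2 * ((1 - p h)^2 / (2 * mix h 0)))
      \<le> expect (Suc n) (\<lambda>h. - ln (p h))"
    unfolding expect_Suc_two_arms using assms
    by (intro expect_mono neg_ln_p_drift_phase1) (simp add: length_histories)
  then show ?thesis
    by (simp only: expect_add expect_diff expect_scale expect_const)
qed

lemma expect_neg_ln_p_phase2:
  assumes "\<not> n < T\<^sub>1"
  shows "expect n (\<lambda>h. - ln (p h)) - \<eta> * (1 - expect n p) \<le> expect (Suc n) (\<lambda>h. - ln (p h))"
proof -
  have "expect n (\<lambda>h. - ln (p h) - \<eta> * (1 - p h)) \<le> expect (Suc n) (\<lambda>h. - ln (p h))"
    unfolding expect_Suc_two_arms using assms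
    by (intro expect_mono neg_ln_p_drift_phase2) (simp add: length_histories)
  then show ?thesis
    by (simp only: expect_diff expect_scale expect_const)
qed

lemma expect_p_phase1: "n \<le> T\<^sub>1 \<Longrightarrow> expect n p \<le> (1/2) * (1 - \<eta>/2)^n"
proof (induction n)
  case 0
  then show ?case by (simp add: expect_0 p_def)
next
  case (Suc n)
  have "expect (Suc n) p \<le> expect n (\<lambda>h. (1 - \<eta>/2) * p h)"
    unfolding expect_Suc_two_arms using Suc.prems
    by (intro expect_mono p_drift_phase1 p_le_half) (auto simp: histories_def)
  also have "\<dots> \<le> (1 - \<eta>/2) * ((1/2) * (1 - \<eta>/2)^n)"
    unfolding expect_scale using Suc eta_pos eta_arms_le gamma_less_half
    by (intro mult_left_mono) auto
  finally show ?case by (simp add: ac_simps)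
qed

lemma expect_inverse_p_phase1: "n \<le> T\<^sub>1 \<Longrightarrow> expect n (\<lambda>h. 1 / p h) \<le> 2 * (1 + 2 * \<eta>)^n"
proof (induction n)
  case 0
  then show ?case by (simp add: expect_0 p_def)
next
  case (Suc n)
  have "expect (Suc n) (\<lambda>h. 1 / p h) \<le> expect n (\<lambda>h. (1 + 2 * \<eta>) * (1 / p h))"
    unfolding expect_Suc_two_arms using Suc.prems
    by (intro expect_mono inverse_p_drift_phase1) (auto simp: length_histories)
  also have "\<dots> \<le> (1 + 2 * \<eta>) * (2 * (1 + 2 * \<eta>)^n)"
    unfolding expect_scale using Suc eta_pos by (intro mult_left_mono) auto
  finally show ?case by (simp add: ac_simps)
qed

lemma expect_odds_phase2:
  "expect (T\<^sub>1 + k) (\<lambda>h. 1 / p h - 1) \<le> (1 - \<eta>/2)^k * expect T\<^sub>1 (\<lambda>h. 1 / p h - 1)"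
proof (induction k)
  case (Suc k)
  have "expect (T\<^sub>1 + Suc k) (\<lambda>h. 1 / p h - 1)
      \<le> expect (T\<^sub>1 + k) (\<lambda>h. (1 - \<eta>/2) * (1 / p h - 1))"
    unfolding add_Suc_right expect_Suc_two_arms
    by (intro expect_mono inverse_p_drift_phase2) (simp add: length_histories)
  also have "\<dots> \<le> (1 - \<eta>/2) * ((1 - \<eta>/2)^k * expect T\<^sub>1 (\<lambda>h. 1 / p h - 1))"
    unfolding expect_scale using Suc eta_arms_le gamma_less_half by (intro mult_left_mono) auto
  finally show ?case by (simp add: ac_simps)
qed simp

lemma second_order_gain:
  assumes "n \<le> T\<^sub>1"
  shows "1 / (8 * ((1 - \<eta>/2)^n / 2 + \<gamma> / 2)) \<le> expect n (\<lambda>h. (1 - p h)^2 / (2 * mix h 0))"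
proof -
  have expect_p: "0 \<le> expect n p"
    using expect_mono[of n "\<lambda>_. 0" p] p_pos by (simp add: expect_const less_imp_le)
  have "expect n (\<lambda>h. mix h 0) \<le> (1 - \<eta>/2)^n / 2 + \<gamma> / 2"
  proof -
    have "(1 - \<gamma>) * expect n p \<le> expect n p"
      using expect_p gamma_pos gamma_less_half by (intro mult_left_le_one_le) auto
    then show ?thesis
      using expect_p_phase1[OF assms] by (simp add: expect_mix_arm0)
  qed
  moreover have "0 < expect n (\<lambda>h. mix h 0)"
    using mix_pos by (intro expect_pos) simp
  ultimately have "1 / (8 * ((1 - \<eta>/2)^n / 2 + \<gamma> / 2)) \<le> (1/8) * (1 / expect n (\<lambda>h. mix h 0))"
    by (simp add: frac_le)
  also have "\<dots> \<le> (1/8) * expect n (\<lambda>h. 1 / mix h 0)"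
    using mix_pos by (simp add: inverse_expect_le_expect_inverse)
  also have "\<dots> = expect n (\<lambda>h. (1/8) * (1 / mix h 0))"
    by (simp only: expect_scale)
  also have "\<dots> \<le> expect n (\<lambda>h. (1 - p h)^2 / (2 * mix h 0))"
  proof (rule expect_mono)
    fix h assume "h \<in> histories n"
    then have "p h \<le> 1/2"
      using assms by (intro p_le_half) (auto simp: histories_def)
    then have "(1/2)^2 \<le> (1 - p h)^2"
      by (intro power_mono) auto
    then have "1/4 \<le> (1 - p h)^2"
      by (simp add: power2_eq_square)
    then show "(1/8) * (1 / mix h 0) \<le> (1 - p h)^2 / (2 * mix h 0)"
      using mix_pos[of 0 h] by (simp add: field_simps)
  qed
  finally show ?thesis .
qed

lemma expect_neg_ln_p_final:
  "expect T (\<lambda>h. - ln (p h)) \<le> 2 * (1 - \<eta>/2)^(T - T\<^sub>1) * (1 + 2 * \<eta>)^T\<^sub>1"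
proof -
  have "expect T (\<lambda>h. - ln (p h)) \<le> expect T (\<lambda>h. 1 / p h - 1)"
  proof (rule expect_mono)
    fix h
    have "ln (1 / p h) \<le> 1 / p h - 1"
      using p_pos[of h] by (intro ln_le_minus_one) simp
    then show "- ln (p h) \<le> 1 / p h - 1"
      using p_pos[of h] by (simp add: ln_div)
  qed
  also have "\<dots> \<le> (1 - \<eta>/2)^(T - T\<^sub>1) * expect T\<^sub>1 (\<lambda>h. 1 / p h - 1)"
    using expect_odds_phase2[of "T - T\<^sub>1"] by simp
  also have "\<dots> \<le> (1 - \<eta>/2)^(T - T\<^sub>1) * (2 * (1 + 2 * \<eta>)^T\<^sub>1)"
  proof (rule mult_left_mono)
    have "expect T\<^sub>1 (\<lambda>h. 1 / p h - 1) \<le> expect T\<^sub>1 (\<lambda>h. 1 / p h)"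
      by (rule expect_mono) simp
    also have "\<dots> \<le> 2 * (1 + 2 * \<eta>)^T\<^sub>1"
      by (rule expect_inverse_p_phase1) simp
    finally show "expect T\<^sub>1 (\<lambda>h. 1 / p h - 1) \<le> 2 * (1 + 2 * \<eta>)^T\<^sub>1" .
  qed (use eta_arms_le gamma_less_half in simp)
  finally show ?thesis by (simp add: ac_simps)
qed

lemma best_arm_loss: "Min ((\<lambda>i. \<Sum>t=1..T. two_phase_loss T t i) ` {..<2}) = real T\<^sub>1"
proof -
  have split: "(\<Sum>t=1..T. f t) = (\<Sum>t=1..T\<^sub>1. f t) + (\<Sum>t=Suc T\<^sub>1..T. f t)"
    for f :: "nat \<Rightarrow> real"
    using sum.ub_add_nat[of 1 "T\<^sub>1" f "T - T\<^sub>1"] by simp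
  have "(\<Sum>t=1..T. two_phase_loss T t 0) = real T\<^sub>1"
    unfolding split by (simp add: two_phase_loss_def)
  moreover have "(\<Sum>t=1..T. two_phase_loss T t (Suc 0)) = real T - real T\<^sub>1"
    unfolding split by (simp add: two_phase_loss_def of_nat_diff)
  ultimately have "(\<lambda>i. \<Sum>t=1..T. two_phase_loss T t i) ` {..<2} = {real T\<^sub>1, real T - real T\<^sub>1}"
    by (auto simp: numeral_2_eq_2 lessThan_Suc)
  moreover have "real T\<^sub>1 \<le> real T - real T\<^sub>1"
    by linarith
  ultimately show ?thesis by (simp add: min_def)
qed

lemma regret_eq:
  "wsu_expected_regret 2 \<eta> \<gamma> (two_phase_loss T) T =
     \<gamma> * T / 2 - \<gamma> * T\<^sub>1
     + (1 - \<gamma>) * ((\<Sum>n\<in>{T\<^sub>1..<T}. 1 - expect n p) - (\<Sum>n<T\<^sub>1. 1 - expect n p))"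
proof -
  define loss where "loss n = expect n (\<lambda>h. \<Sum>j<2. mix h j * two_phase_loss T (Suc n) j)" for n
  have loss1: "loss n = 1 - \<gamma> / 2 - (1 - \<gamma>) * (1 - expect n p)" if "n < T\<^sub>1" for n
    using that
    by (simp add: loss_def sum_lessThan_two two_phase_loss_def expect_mix_arm0 algebra_simps)
  have loss2: "loss n = \<gamma> / 2 + (1 - \<gamma>) * (1 - expect n p)" if "T\<^sub>1 \<le> n" for n
    using that
    by (simp add: loss_def sum_lessThan_two two_phase_loss_def mix_arm1 expect_diff expect_const
        expect_mix_arm0 algebra_simps)
  have "(\<Sum>n<T. loss n) = (\<Sum>n<T\<^sub>1. loss n) + (\<Sum>n\<in>{T\<^sub>1..<T}. loss n)"
    using sum.atLeastLessThan_concat[of 0 "T\<^sub>1" T loss] by (simp add: atLeast0LessThan)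
  also have "\<dots> = real T\<^sub>1 * (1 - \<gamma> / 2) - (1 - \<gamma>) * (\<Sum>n<T\<^sub>1. 1 - expect n p)
      + real (T - T\<^sub>1) * (\<gamma> / 2) + (1 - \<gamma>) * (\<Sum>n\<in>{T\<^sub>1..<T}. 1 - expect n p)"
    by (simp add: loss1 loss2 sum.distrib sum_subtractf flip: sum_distrib_left)
  finally show ?thesis
    unfolding expected_regret_eq best_arm_loss loss_def[symmetric]
    by (simp add: of_nat_diff algebra_simps)
qed

lemma phase_excess_ge:
  "\<eta> * (\<Sum>n<T\<^sub>1. 1 / (8 * ((1 - \<eta>/2)^n / 2 + \<gamma> / 2)))
     - 2 * (1 - \<eta>/2)^(T - T\<^sub>1) * (1 + 2 * \<eta>)^T\<^sub>1 / \<eta>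
   \<le> (\<Sum>n\<in>{T\<^sub>1..<T}. 1 - expect n p) - (\<Sum>n<T\<^sub>1. 1 - expect n p)"
proof -
  define \<Phi> where "\<Phi> n = expect n (\<lambda>h. - ln (p h))" for n
  define G where "G n = expect n (\<lambda>h. (1 - p h)^2 / (2 * mix h 0))" for n
  define P1 where "P1 = (\<Sum>n<T\<^sub>1. 1 - expect n p)"
  define P2 where "P2 = (\<Sum>n\<in>{T\<^sub>1..<T}. 1 - expect n p)"
  define X where "X = (\<Sum>n<T\<^sub>1. 1 / (8 * ((1 - \<eta>/2)^n / 2 + \<gamma> / 2)))"
  define B where "B = 2 * (1 - \<eta>/2)^(T - T\<^sub>1) * (1 + 2 * \<eta>)^T\<^sub>1"
  have phase1: "\<eta> * P1 + \<eta>^2 * (\<Sum>n<T\<^sub>1. G n) \<le> \<Phi> T\<^sub>1 - \<Phi> 0"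
  proof -
    have "(\<Sum>n<T\<^sub>1. \<eta> * (1 - expect n p) + \<eta>^2 * G n) \<le> (\<Sum>n<T\<^sub>1. \<Phi> (Suc n) - \<Phi> n)"
      using expect_neg_ln_p_phase1 by (intro sum_mono) (force simp: \<Phi>_def G_def)
    then show ?thesis
      by (simp add: sum_lessThan_telescope P1_def sum.distrib sum_distrib_left)
  qed
  have phase2: "\<Phi> T\<^sub>1 - \<Phi> T \<le> \<eta> * P2"
  proof -
    have "(\<Sum>n\<in>{T\<^sub>1..<T}. - (\<eta> * (1 - expect n p))) \<le> (\<Sum>n\<in>{T\<^sub>1..<T}. \<Phi> (Suc n) - \<Phi> n)"
    proof (rule sum_mono)
      fix n assume "n \<in> {T\<^sub>1..<T}"
      then show "- (\<eta> * (1 - expect n p)) \<le> \<Phi> (Suc n) - \<Phi> n"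
        using expect_neg_ln_p_phase2[of n] by (simp add: \<Phi>_def)
    qed
    then show ?thesis
      using sum_Suc_diff'[of T\<^sub>1 T \<Phi>] by (simp add: P2_def sum_negf sum_distrib_left)
  qed
  have start: "0 \<le> \<Phi> 0"
    by (simp add: \<Phi>_def expect_0 p_def ln_div)
  have final: "\<Phi> T \<le> B"
    unfolding \<Phi>_def B_def by (rule expect_neg_ln_p_final)
  have "X \<le> (\<Sum>n<T\<^sub>1. G n)"
    unfolding X_def G_def by (intro sum_mono second_order_gain) simp
  then have gain: "\<eta>^2 * X \<le> \<eta>^2 * (\<Sum>n<T\<^sub>1. G n)"
    by (simp add: mult_left_mono)
  have "\<eta> * (\<eta> * X - B / \<eta>) = \<eta>^2 * X - B" and "\<eta> * (P2 - P1) = \<eta> * P2 - \<eta> * P1"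
    using eta_pos by (simp_all add: algebra_simps power2_eq_square)
  then have "\<eta> * (\<eta> * X - B / \<eta>) \<le> \<eta> * (P2 - P1)"
    using phase1 phase2 start final gain by linarith
  then show ?thesis
    using eta_pos unfolding P1_def P2_def X_def B_def by simp
qed

lemma regret_lower_bound:
  "\<gamma> * T / 2 - \<gamma> * T\<^sub>1
     + (1 - \<gamma>) * \<eta> * (\<Sum>n<T\<^sub>1. 1 / (8 * ((1 - \<eta>/2)^n / 2 + \<gamma> / 2)))
     - 2 * (1 - \<eta>/2)^(T - T\<^sub>1) * (1 + 2 * \<eta>)^T\<^sub>1 / \<eta>
   \<le> wsu_expected_regret 2 \<eta> \<gamma> (two_phase_loss T) T"
proof -
  define X where "X = (\<Sum>n<T\<^sub>1. 1 / (8 * ((1 - \<eta>/2)^n / 2 + \<gamma> / 2)))"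
  define B where "B = 2 * (1 - \<eta>/2)^(T - T\<^sub>1) * (1 + 2 * \<eta>)^T\<^sub>1"
  have "(1 - \<gamma>) * (\<eta> * X - B / \<eta>)
      \<le> (1 - \<gamma>) * ((\<Sum>n\<in>{T\<^sub>1..<T}. 1 - expect n p) - (\<Sum>n<T\<^sub>1. 1 - expect n p))"
    using phase_excess_ge gamma_less_half unfolding X_def B_def by (intro mult_left_mono) auto
  moreover have "(1 - \<gamma>) * (B / \<eta>) \<le> B / \<eta>"
    using gamma_pos gamma_less_half eta_pos eta_arms_le
    by (intro mult_left_le_one_le) (auto simp: B_def)
  ultimately show ?thesis
    unfolding regret_eq X_def[symmetric] B_def[symmetric] by (simp add: algebra_simps)
qed
end

lemma ln_le_two_sqrt:
  fixes x :: real
  assumes x: "0 < x"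
  shows "ln x \<le> 2 * sqrt x"
proof -
  have "ln x = 2 * ln (sqrt x)"
    using x by (simp add: ln_sqrt)
  also have "\<dots> \<le> 2 * sqrt x"
    using ln_le_minus_one[of "sqrt x"] x by simp
  finally show ?thesis .
qed

lemma exp_neg_le_inverse: "0 < y \<Longrightarrow> exp (- y) \<le> 1 / y" for y :: real
proof -
  assume y: "0 < y"
  have "y \<le> exp y"
    using exp_ge_add_one_self[of y] by linarith
  then show ?thesis
    using y by (simp add: exp_minus field_simps)
qed

lemma one_minus_power_le_exp: "0 \<le> x \<Longrightarrow> x \<le> 1 \<Longrightarrow> (1 - x)^n \<le> exp (- x * n)" for x :: real
  using power_mono[OF exp_ge_add_one_self[of "- x"], of n]
  by (simp add: exp_of_nat_mult[symmetric] ac_simps)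

lemma one_plus_power_le_exp: "0 \<le> x \<Longrightarrow> (1 + x)^n \<le> exp (x * n)" for x :: real
  using power_mono[OF exp_ge_add_one_self[of x], of n]
  by (simp add: exp_of_nat_mult[symmetric] ac_simps)

lemma late_discount_le:
  fixes u \<eta> :: real and n :: nat
  assumes u: "10^8 \<le> u" and eta: "1 / u^2 \<le> \<eta>" "\<eta> \<le> 1" and n: "u^3 / 400 \<le> n"
  shows "(1 - \<eta>/2)^n \<le> 1 / u^2"
proof -
  have eta0: "0 \<le> \<eta>"
    using order.trans[OF _ eta(1)] by simp
  then have "(1 - \<eta>/2)^n \<le> exp (- (\<eta>/2) * n)"
    using eta by (intro one_minus_power_le_exp) auto
  also have "\<dots> \<le> exp (- (u / 800))"
  proof -
    have "1 / u^2 * (u^3 / 400) \<le> \<eta> * n"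
      using eta eta0 n u by (intro mult_mono) auto
    moreover have "1 / u^2 * (u^3 / 400) = u / 400"
      using u by (simp add: power2_eq_square power3_eq_cube)
    ultimately show ?thesis by simp
  qed
  also have "\<dots> \<le> exp (- (2 * ln u))"
  proof -
    have "3200 \<le> sqrt u"
      using real_sqrt_le_mono[OF order.trans[OF _ u], of "3200^2"] by simp
    then have "3200 * sqrt u \<le> sqrt u * sqrt u"
      using u by (intro mult_right_mono) auto
    also have "\<dots> = u"
      using u by simp
    finally have "4 * sqrt u \<le> u / 800"
      by simp
    moreover have "ln u \<le> 2 * sqrt u"
      using u by (intro ln_le_two_sqrt) simp
    ultimately show ?thesis by simp
  qed
  also have "\<dots> = 1 / exp (ln u)^2"
    using exp_of_nat_mult[of 2 "ln u"] by (simp add: exp_minus inverse_eq_divide)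
  also have "\<dots> = 1 / u^2"
    using u by simp
  finally show ?thesis .
qed

lemma discounted_sum_ge:
  fixes u \<eta> \<gamma> :: real and m :: nat
  assumes u: "10^8 \<le> u" and eta: "1 / u^2 \<le> \<eta>" "\<eta> \<le> 1" and gamma: "\<eta> \<le> \<gamma>"
    and m: "real m = u^3 / 100"
  shows "u^3 / (1600 * \<gamma>) \<le> (\<Sum>n<m. 1 / (8 * ((1 - \<eta>/2)^n / 2 + \<gamma> / 2)))"
proof -
  have gamma_pos: "0 < \<gamma>"
    using less_le_trans[OF _ order.trans[OF eta(1) gamma]] u by simp
  have "m \<le> 2 * (m div 2) + 1"
    by simp
  from of_nat_mono[OF this]
  have half: "(real m - 1) / 2 \<le> real (m div 2)" and rest: "real m / 2 \<le> real (m - m div 2)"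
    by (simp_all add: of_nat_diff)
  have u3: "200 \<le> u^3"
    using power_mono[OF u, of 3] by simp
  have late: "1 / (8 * \<gamma>) \<le> 1 / (8 * ((1 - \<eta>/2)^n / 2 + \<gamma> / 2))" if n: "n \<in> {m div 2..<m}" for n
  proof -
    have "u^3 / 400 \<le> n"
      using n half m u3 by auto
    from late_discount_le[OF u eta this] have "(1 - \<eta>/2)^n \<le> \<gamma>"
      using eta gamma by linarith
    moreover have "0 \<le> (1 - \<eta>/2)^n"
      using eta by simp
    ultimately show ?thesis
      using gamma_pos by (intro divide_left_mono) (auto intro: add_nonneg_pos)
  qed
  have "u^3 / (1600 * \<gamma>) \<le> real (m - m div 2) * (1 / (8 * \<gamma>))"
    using rest m gamma_pos by (simp add: field_simps)
  also have "\<dots> = (\<Sum>n\<in>{m div 2..<m}. 1 / (8 * \<gamma>))"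
    by simp
  also have "\<dots> \<le> (\<Sum>n\<in>{m div 2..<m}. 1 / (8 * ((1 - \<eta>/2)^n / 2 + \<gamma> / 2)))"
    using late by (rule sum_mono)
  also have "\<dots> \<le> (\<Sum>n<m. 1 / (8 * ((1 - \<eta>/2)^n / 2 + \<gamma> / 2)))"
    using eta gamma_pos by (intro sum_mono2) (auto intro: add_nonneg_pos)
  finally show ?thesis .
qed

lemma phase_product_le:
  fixes u \<eta> :: real and m N :: nat
  assumes u: "0 < u" and eta: "1 / u^2 \<le> \<eta>" "\<eta> \<le> 1"
    and m: "real m = u^3 / 100" and N: "real N = 99 * u^3 / 100"
  shows "2 * (1 - \<eta>/2)^N * (1 + 2 * \<eta>)^m / \<eta> \<le> 5 * u"
proof -
  have eta_pos: "0 < \<eta>"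
    using less_le_trans[OF _ eta(1)] u by simp
  have "(1 - \<eta>/2)^N * (1 + 2 * \<eta>)^m \<le> exp (- (\<eta>/2) * N) * exp ((2 * \<eta>) * m)"
    using eta eta_pos
    by (intro mult_mono one_minus_power_le_exp one_plus_power_le_exp) auto
  also have "\<dots> = exp (- (\<eta> * u^3 * (19/40)))"
    unfolding exp_add[symmetric] m N by (simp add: algebra_simps)
  also have "\<dots> \<le> 1 / (\<eta> * u^3 * (19/40))"
    using eta_pos u by (intro exp_neg_le_inverse) simp
  finally have "2 * ((1 - \<eta>/2)^N * (1 + 2 * \<eta>)^m) / \<eta> \<le> 2 * (1 / (\<eta> * u^3 * (19/40))) / \<eta>"
    using eta_pos by (intro divide_right_mono mult_left_mono) auto
  also have "\<dots> = (80/19) / (\<eta>^2 * u^3)"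
    by (simp add: field_simps power2_eq_square)
  also have "\<dots> \<le> 5 / (\<eta>^2 * u^3)"
    using eta_pos u by (intro divide_right_mono) auto
  also have "\<dots> \<le> 5 / (1 / u)"
  proof -
    have "(1 / u^2)^2 \<le> \<eta>^2"
      using eta u by (intro power_mono) auto
    then have "(1 / u^2)^2 * u^3 \<le> \<eta>^2 * u^3"
      using u by (simp add: mult_right_mono)
    moreover have "(1 / u^2)^2 * u^3 = 1 / u"
      using u by (simp add: field_simps power2_eq_square power3_eq_cube)
    ultimately show ?thesis
      using u eta_pos by (intro divide_left_mono) auto
  qed
  finally show ?thesis by (simp add: mult.assoc)
qed

lemma exploration_tradeoff:
  fixes u \<eta> \<gamma> :: real
  assumes u: "0 < u" and eta: "1 / u^2 \<le> \<eta>" and gamma: "0 < \<gamma>"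
  shows "u^2 / 100 \<le> (49/100) * \<gamma> * u^3 + \<eta> * u^3 / (3200 * \<gamma>)"
proof -
  have eta_pos: "0 < \<eta>"
    using less_le_trans[OF _ eta] u by simp
  consider "1 / (40 * u) \<le> \<gamma>" | "\<gamma> < 1 / (40 * u)"
    by linarith
  then show ?thesis
  proof cases
    case 1
    then have "(49/100) * (1 / (40 * u)) * u^3 \<le> (49/100) * \<gamma> * u^3"
      using u by (intro mult_right_mono) auto
    moreover have "(49/100) * (1 / (40 * u)) * u^3 = (49/4000) * u^2"
      using u by (simp add: power2_eq_square power3_eq_cube)
    moreover have "0 \<le> \<eta> * u^3 / (3200 * \<gamma>)"
      using u eta_pos gamma by simp
    ultimately show ?thesis
      using zero_le_power2[of u] by linarith
  next
    case 2
    then have "1 / u^2 * u^3 / (3200 * (1 / (40 * u))) \<le> \<eta> * u^3 / (3200 * \<gamma>)"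
      using u eta eta_pos gamma by (intro frac_le mult_right_mono) auto
    moreover have "1 / u^2 * u^3 / (3200 * (1 / (40 * u))) = u^2 / 80"
      using u by (simp add: field_simps power2_eq_square power3_eq_cube)
    moreover have "0 \<le> (49/100) * \<gamma> * u^3"
      using u gamma by simp
    ultimately show ?thesis
      using zero_le_power2[of u] by linarith
  qed
qed

lemma cube_root_facts:
  fixes x :: real
  assumes x: "10^24 \<le> x"
  shows "10^8 \<le> x powr (1/3)" and "(x powr (1/3))^3 = x"
    and "x powr (2/3) = (x powr (1/3))^2" and "x powr (-2/3) = 1 / (x powr (1/3))^2"
proof -
  have pos: "0 < x"
    using less_le_trans[OF _ x] by simp
  have root_power: "(x powr (1/3))^n = x powr (n / 3)" for n :: nat
    using pos by (simp add: powr_realpow[symmetric] powr_powr)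
  show cube: "(x powr (1/3))^3 = x"
    using root_power[of 3] pos by simp
  show square: "x powr (2/3) = (x powr (1/3))^2"
    using root_power[of 2] by (simp only: of_nat_numeral)
  have "(-2/3::real) = - (2/3)"
    by simp
  then show "x powr (-2/3) = 1 / (x powr (1/3))^2"
    by (simp only: powr_minus_divide square)
  have "((10::real)^8)^3 \<le> (x powr (1/3))^3"
    using x cube by simp
  then show "10^8 \<le> x powr (1/3)"
    by (subst (asm) power_mono_iff) auto
qed

context wsu_two_phase
begin

lemma regret_ge_square:
  assumes u: "10^8 \<le> u" and T: "real T = u^3" and dvd: "100 dvd T" and eta: "1 / u^2 \<le> \<eta>"
  shows "u^2 / 200 \<le> wsu_expected_regret 2 \<eta> \<gamma> (two_phase_loss T) T"
proof -
  define X where "X = (\<Sum>n<T\<^sub>1. 1 / (8 * ((1 - \<eta>/2)^n / 2 + \<gamma> / 2)))"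
  have T1: "real T\<^sub>1 = u^3 / 100"
    using dvd T by (simp add: real_of_nat_div)
  then have N: "real (T - T\<^sub>1) = 99 * u^3 / 100"
    using T by (simp add: of_nat_diff)
  have eta_le: "\<eta> \<le> 1" and eta_le_gamma: "\<eta> \<le> \<gamma>"
    using eta_arms_le eta_pos gamma_less_half by simp_all
  have "(1/2) * \<eta> * (u^3 / (1600 * \<gamma>)) \<le> (1 - \<gamma>) * \<eta> * X"
    unfolding X_def using discounted_sum_ge[OF u eta eta_le eta_le_gamma T1]
      gamma_less_half gamma_pos eta_pos u
    by (intro mult_mono) auto
  moreover have "2 * (1 - \<eta>/2)^(T - T\<^sub>1) * (1 + 2 * \<eta>)^T\<^sub>1 / \<eta> \<le> 5 * u"
    using u eta eta_le T1 N by (intro phase_product_le) auto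
  moreover have "\<gamma> * T / 2 - \<gamma> * T\<^sub>1 = (49/100) * \<gamma> * u^3"
    using T T1 by simp
  moreover have "u^2 / 100 \<le> (49/100) * \<gamma> * u^3 + \<eta> * u^3 / (3200 * \<gamma>)"
    using u eta gamma_pos by (intro exploration_tradeoff) auto
  moreover have "5 * u \<le> u^2 / 200"
    using u by (simp add: power2_eq_square)
  moreover have "(1/2) * \<eta> * (u^3 / (1600 * \<gamma>)) = \<eta> * u^3 / (3200 * \<gamma>)"
    by simp
  ultimately show ?thesis
    using regret_lower_bound[folded X_def] by linarith
qed

end

theorem theorem2:
  fixes \<eta> \<gamma> :: "nat \<Rightarrow> real"
  assumes valid: "\<And>T. T > 0 \<Longrightarrow> 100 dvd T \<Longrightarrow> valid_pair 2 (\<eta> T) (\<gamma> T)"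
    and eta_lb: "\<And>T. T > 0 \<Longrightarrow> 100 dvd T \<Longrightarrow> \<eta> T \<ge> real T powr (-2/3)"
    and gamma_ub: "\<And>T. T > 0 \<Longrightarrow> 100 dvd T \<Longrightarrow> \<gamma> T \<le> real T powr (-1/3)"
  shows "\<exists>c > 0. \<exists>T0. \<forall>T \<ge> T0. T > 0 \<longrightarrow> 100 dvd T \<longrightarrow>
           wsu_expected_regret 2 (\<eta> T) (\<gamma> T) (two_phase_loss T) T \<ge> c * real T powr (2/3)"
proof (intro exI[of _ "1/200"] conjI exI[of _ "10^24"] allI impI)
  fix T :: nat
  assume T: "10^24 \<le> T" "0 < T" "100 dvd T"
  interpret wsu_two_phase "\<eta> T" "\<gamma> T" T
    using valid T by unfold_locales
  have "(10::real)^24 \<le> real T"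
    using T(1) by (metis of_nat_le_iff of_nat_numeral of_nat_power)
  note cube_root = cube_root_facts[OF this]
  have "real T powr (2/3) / 200 \<le> wsu_expected_regret 2 (\<eta> T) (\<gamma> T) (two_phase_loss T) T"
    using regret_ge_square[OF cube_root(1) cube_root(2)[symmetric] T(3)] eta_lb[OF T(2,3)]
    unfolding cube_root(3,4) by simp
  then show "1/200 * real T powr (2/3) \<le> wsu_expected_regret 2 (\<eta> T) (\<gamma> T) (two_phase_loss T) T"
    by simp
qed simp

end
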